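(* Let $n\ge 2$ be even and let $\pi=(\pi_1,\ldots,\pi_n)$ be a permutation of $\{1,\ldots,n\}$. Let $\Delta(\pi)=\sum_{i=1}^{n-1}|\pi_{i+1}-\pi_i|$ and $\Delta^*_n=\max\{\Delta(\sigma):\sigma \text{ a permutation of }\{1,\ldots,n\}\}$. Then $\Delta(\pi)=\Delta^*_n$ if and only if $\pi$ is mid-alternating and $\{\pi_1,\pi_n\}=\{\frac n2,\frac n2+1\}$. Moreover, $\Delta^*_n=(n^2-2)/2$.
   Context: For $n=2k$ even, a permutation $\pi$ of $\{1,\ldots,n\}$ is mid-alternating if for every $i<n$ either ($\pi_i\le k$ and $\pi_{i+1}\ge k+1$) or ($\pi_i\ge k+1$ and $\pi_{i+1}\le k$). *)

theory Defs
  imports Main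
begin

text \<open>A permutation of {1..n} is represented as a function p :: nat \<Rightarrow> nat with
  bij_betw p {1..n} {1..n}; its one-line notation is (p 1, ..., p n).\<close>

definition is_perm :: "nat \<Rightarrow> (nat \<Rightarrow> nat) \<Rightarrow> bool" where
  "is_perm n p \<longleftrightarrow> bij_betw p {1..n} {1..n}"

definition Delta :: "nat \<Rightarrow> (nat \<Rightarrow> nat) \<Rightarrow> int" where
  "Delta n p = (\<Sum>i=1..n-1. \<bar>int (p (i+1)) - int (p i)\<bar>)"

definition Delta_star :: "nat \<Rightarrow> int" where
  "Delta_star n = Max {Delta n s | s. is_perm n s}"

definition mid_alternating :: "nat \<Rightarrow> (nat \<Rightarrow> nat) \<Rightarrow> bool" where
  "mid_alternating n p \<longleftrightarrow> (let k = n div 2 in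
     \<forall>i. 1 \<le> i \<and> i < n \<longrightarrow>
       ((p i \<le> k \<and> p (i+1) \<ge> k+1) \<or> (p i \<ge> k+1 \<and> p (i+1) \<le> k)))"

end

theory Submission
  imports Defs
begin

text \<open>Put n = 2k and weigh each value x by w x = |2x - 2k - 1|, twice its distance from the
  midpoint k + 1/2. For any two values 2|b - a| \<le> w a + w b, with equality exactly when a and b
  lie on opposite sides of the midpoint. Summing over the n - 1 steps of a permutation p, every
  value is counted twice except the end values p 1 and p n, so
  2 \<Delta>(p) = 2 \<Sigma> w - w (p 1) - w (p n) - (total slack) \<le> 4k^2 - 1 - 1,
  with equality iff every step crosses the midpoint and w (p 1) = w (p n) = 1, i.e. the end values
  are k and k + 1. The zigzag k, 2k, k-1, 2k-1, ..., 1, k+1 attains the bound.\<close>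

definition mid_weight :: "nat \<Rightarrow> nat \<Rightarrow> int" where
  "mid_weight k x = \<bar>2 * int x - 2 * int k - 1\<bar>"

definition step_slack :: "nat \<Rightarrow> nat \<Rightarrow> nat \<Rightarrow> int" where
  "step_slack k a b = mid_weight k a + mid_weight k b - 2 * \<bar>int b - int a\<bar>"

lemma step_slack_nonneg: "step_slack k a b \<ge> 0"
  unfolding step_slack_def mid_weight_def by arith

lemma step_slack_eq_0_iff:
  "step_slack k a b = 0 \<longleftrightarrow> (a \<le> k \<and> b \<ge> k + 1) \<or> (a \<ge> k + 1 \<and> b \<le> k)"
  unfolding step_slack_def mid_weight_def by arith

lemma mid_weight_ge_1: "mid_weight k x \<ge> 1"
  unfolding mid_weight_def by arith

lemma mid_weight_eq_1_iff: "mid_weight k x = 1 \<longleftrightarrow> x = k \<or> x = k + 1"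
  unfolding mid_weight_def by arith

lemma sum_mid_weight_upto_mid:
  "m \<le> k \<Longrightarrow> (\<Sum>x=1..m. mid_weight k x) = int m * (2 * int k - int m)"
proof (induction m)
  case (Suc m)
  then have "(\<Sum>x=1..Suc m. mid_weight k x) = int m * (2 * int k - int m) + mid_weight k (Suc m)"
    by simp
  also have "mid_weight k (Suc m) = 2 * int k + 1 - 2 * int (Suc m)"
    using Suc.prems by (simp add: mid_weight_def)
  finally show ?case by (simp add: algebra_simps)
qed simp

lemma sum_mid_weight_beyond_mid:
  "k \<le> m \<Longrightarrow> (\<Sum>x=1..m. mid_weight k x) = (int k)\<^sup>2 + (int m - int k)\<^sup>2"
proof (induction m rule: dec_induct)
  case base
  then show ?case
    using sum_mid_weight_upto_mid[of k k] by (simp add: power2_eq_square algebra_simps)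
next
  case (step m)
  then have "(\<Sum>x=1..Suc m. mid_weight k x) = (int k)\<^sup>2 + (int m - int k)\<^sup>2 + mid_weight k (Suc m)"
    by simp
  also have "mid_weight k (Suc m) = 2 * int (Suc m) - 2 * int k - 1"
    using step by (simp add: mid_weight_def)
  finally show ?case by (simp add: algebra_simps power2_eq_square)
qed

lemma sum_adjacent_pairs:
  fixes g :: "nat \<Rightarrow> 'a::ab_group_add"
  shows "(\<Sum>i=1..m. g i + g (i + 1)) = (\<Sum>i=1..m+1. g i) + (\<Sum>i=1..m+1. g i) - g 1 - g (m + 1)"
  by (induction m) (simp_all add: algebra_simps)

lemma two_Delta_eq:
  assumes "n = 2 * k" "k \<ge> 1" "is_perm n p"
  shows "2 * Delta n p = 4 * (int k)\<^sup>2 - mid_weight k (p 1) - mid_weight k (p n)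
           - (\<Sum>i=1..n-1. step_slack k (p i) (p (i + 1)))"
proof -
  have "(\<Sum>i=1..n. mid_weight k (p i)) = (\<Sum>x=1..n. mid_weight k x)"
    using sum.reindex_bij_betw[of p "{1..n}" "{1..n}" "mid_weight k"] assms(3)
    by (simp add: is_perm_def)
  also have "\<dots> = 2 * (int k)\<^sup>2"
    using sum_mid_weight_beyond_mid[of k "2 * k"] assms(1) by (simp add: power2_eq_square)
  finally have weights: "(\<Sum>i=1..n. mid_weight k (p i)) = 2 * (int k)\<^sup>2" .
  have "(\<Sum>i=1..n-1. step_slack k (p i) (p (i + 1)))
          = (\<Sum>i=1..n-1. mid_weight k (p i) + mid_weight k (p (i + 1))) - 2 * Delta n p"
    unfolding step_slack_def Delta_def by (simp add: sum_subtractf sum_distrib_left)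
  also have "(\<Sum>i=1..n-1. mid_weight k (p i) + mid_weight k (p (i + 1)))
          = 2 * (\<Sum>i=1..n. mid_weight k (p i)) - mid_weight k (p 1) - mid_weight k (p n)"
    using sum_adjacent_pairs[of "\<lambda>i. mid_weight k (p i)" "n - 1"] assms(1,2) by simp
  finally show ?thesis using weights by simp
qed

lemma mid_alternating_iff_slack_zero:
  assumes "n = 2 * k"
  shows "mid_alternating n p \<longleftrightarrow> (\<forall>i\<in>{1..n-1}. step_slack k (p i) (p (i + 1)) = 0)"
proof -
  have "i \<in> {1..n-1} \<longleftrightarrow> 1 \<le> i \<and> i < n" for i
    using assms by auto
  then show ?thesis
    using assms unfolding mid_alternating_def Let_def step_slack_eq_0_iff by auto
qed

lemma two_Delta_le:
  assumes "n = 2 * k" "k \<ge> 1" "is_perm n p"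
  shows "2 * Delta n p \<le> 4 * (int k)\<^sup>2 - 2"
proof -
  have "(\<Sum>i=1..n-1. step_slack k (p i) (p (i + 1))) \<ge> 0"
    by (simp add: sum_nonneg step_slack_nonneg)
  then show ?thesis
    using two_Delta_eq[OF assms] mid_weight_ge_1[of k "p 1"] mid_weight_ge_1[of k "p n"]
    by linarith
qed

lemma two_Delta_eq_bound_iff:
  assumes "n = 2 * k" "k \<ge> 1" "is_perm n p"
  shows "2 * Delta n p = 4 * (int k)\<^sup>2 - 2 \<longleftrightarrow> mid_alternating n p \<and> {p 1, p n} = {k, k + 1}"
proof -
  let ?slack = "\<lambda>i. step_slack k (p i) (p (i + 1))"
  have slack_nonneg: "sum ?slack {1..n-1} \<ge> 0"
    by (simp add: sum_nonneg step_slack_nonneg)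
  have "inj_on p {1..n}"
    using assms(3) by (simp add: is_perm_def bij_betw_def)
  moreover have "1 \<in> {1..n}" "n \<in> {1..n}" "1 \<noteq> n"
    using assms(1,2) by auto
  ultimately have "p 1 \<noteq> p n"
    by (metis inj_onD)
  then have ends: "mid_weight k (p 1) = 1 \<and> mid_weight k (p n) = 1 \<longleftrightarrow> {p 1, p n} = {k, k + 1}"
    unfolding mid_weight_eq_1_iff by (auto simp: doubleton_eq_iff)
  have "2 * Delta n p = 4 * (int k)\<^sup>2 - 2 \<longleftrightarrow>
          sum ?slack {1..n-1} = 0 \<and> mid_weight k (p 1) = 1 \<and> mid_weight k (p n) = 1"
    using two_Delta_eq[OF assms] slack_nonneg mid_weight_ge_1[of k "p 1"] mid_weight_ge_1[of k "p n"]
    by linarith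
  also have "sum ?slack {1..n-1} = 0 \<longleftrightarrow> mid_alternating n p"
    unfolding mid_alternating_iff_slack_zero[OF assms(1)]
    by (simp add: sum_nonneg_eq_0_iff step_slack_nonneg)
  finally show ?thesis using ends by blast
qed

definition zigzag :: "nat \<Rightarrow> nat \<Rightarrow> nat" where
  "zigzag k i = (if odd i then k - i div 2 else 2 * k + 1 - i div 2)"

lemma zigzag_odd:
  assumes "odd i" "i \<le> 2 * k"
  shows "1 \<le> zigzag k i \<and> zigzag k i \<le> k \<and> i = 2 * (k - zigzag k i) + 1"
  using assms by (auto simp: zigzag_def elim!: oddE)

lemma zigzag_even:
  assumes "even i" "1 \<le> i" "i \<le> 2 * k"
  shows "k + 1 \<le> zigzag k i \<and> zigzag k i \<le> 2 * k \<and> i = 2 * (2 * k + 1 - zigzag k i)"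
  using assms by (auto simp: zigzag_def elim!: evenE)

lemma is_perm_zigzag: "is_perm (2 * k) (zigzag k)"
proof -
  have maps_to: "zigzag k ` {1..2 * k} \<subseteq> {1..2 * k}"
  proof (rule image_subsetI)
    fix i assume "i \<in> {1..2 * k}"
    then show "zigzag k i \<in> {1..2 * k}"
      using zigzag_odd[of i k] zigzag_even[of i k] by (cases "even i") auto
  qed
  have "inj_on (zigzag k) {1..2 * k}"
  proof (rule inj_onI)
    fix i j assume "i \<in> {1..2 * k}" "j \<in> {1..2 * k}" "zigzag k i = zigzag k j"
    then show "i = j"
      using zigzag_odd[of i k] zigzag_even[of i k] zigzag_odd[of j k] zigzag_even[of j k]
      by (cases "even i"; cases "even j") auto
  qed
  with maps_to show ?thesis
    unfolding is_perm_def bij_betw_def using endo_inj_surj[of "{1..2 * k}"] by simp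
qed

lemma zigzag_mid_alternating: "mid_alternating (2 * k) (zigzag k)"
  unfolding mid_alternating_def Let_def
proof (intro allI impI)
  fix i assume "1 \<le> i \<and> i < 2 * k"
  then show "(zigzag k i \<le> 2 * k div 2 \<and> 2 * k div 2 + 1 \<le> zigzag k (i + 1)) \<or>
             (2 * k div 2 + 1 \<le> zigzag k i \<and> zigzag k (i + 1) \<le> 2 * k div 2)"
    using zigzag_odd[of i k] zigzag_even[of i k] zigzag_odd[of "i + 1" k] zigzag_even[of "i + 1" k]
    by (cases "even i") auto
qed

lemma zigzag_ends: "k \<ge> 1 \<Longrightarrow> {zigzag k 1, zigzag k (2 * k)} = {k, k + 1}"
  by (auto simp: zigzag_def)

lemma Delta_nonneg: "Delta n p \<ge> 0"
  unfolding Delta_def by (simp add: sum_nonneg)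

lemma Delta_star_eq:
  assumes "n = 2 * k" "k \<ge> 1"
  shows "Delta_star n = 2 * (int k)\<^sup>2 - 1"
proof -
  let ?D = "{Delta n s | s. is_perm n s}"
  have bounded: "?D \<subseteq> {0..2 * (int k)\<^sup>2 - 1}"
  proof
    fix d assume "d \<in> ?D"
    then obtain s where "is_perm n s" "d = Delta n s"
      by blast
    then show "d \<in> {0..2 * (int k)\<^sup>2 - 1}"
      using two_Delta_le[OF assms \<open>is_perm n s\<close>] Delta_nonneg[of n s] by simp
  qed
  have "2 * Delta n (zigzag k) = 4 * (int k)\<^sup>2 - 2"
    using two_Delta_eq_bound_iff[OF assms, of "zigzag k"] assms
      is_perm_zigzag zigzag_mid_alternating zigzag_ends
    by simp
  then have "Delta n (zigzag k) = 2 * (int k)\<^sup>2 - 1"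
    by simp
  moreover have "is_perm n (zigzag k)"
    using is_perm_zigzag assms(1) by simp
  ultimately have "2 * (int k)\<^sup>2 - 1 \<in> ?D"
    by (metis (mono_tags, lifting) mem_Collect_eq)
  then show ?thesis
    unfolding Delta_star_def using bounded by (intro Max_eqI) (auto intro: finite_subset)
qed

theorem theorem3p3:
  fixes n :: nat and p :: "nat \<Rightarrow> nat"
  assumes "n \<ge> 2" and "even n" and "is_perm n p"
  shows "(Delta n p = Delta_star n \<longleftrightarrow>
            mid_alternating n p \<and> {p 1, p n} = {n div 2, n div 2 + 1})
         \<and> 2 * Delta_star n = int n ^ 2 - 2"
proof -
  obtain k where n: "n = 2 * k" using assms(2) by (elim evenE)
  have k: "k \<ge> 1" using n assms(1) by simp
  have "Delta n p = Delta_star n \<longleftrightarrow> 2 * Delta n p = 4 * (int k)\<^sup>2 - 2"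
    using Delta_star_eq[OF n k] by linarith
  also have "\<dots> \<longleftrightarrow> mid_alternating n p \<and> {p 1, p n} = {k, k + 1}"
    using two_Delta_eq_bound_iff[OF n k assms(3)] .
  finally show ?thesis
    using Delta_star_eq[OF n k] n by (simp add: power2_eq_square)
qed

end
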